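(* Let $N\ge1$, $\alpha>0$, $\tau_0\ge0$, let $c_1,\dots,c_N\in\mathbb{C}\setminus\{0\}$ and let $\mu_1,\dots,\mu_N\in\mathbb{C}$ be pairwise distinct. For $\lambda\in\mathbb{C}$ put $k_i:=\lambda+\mu_i$ and let $\mathcal{S}:=\{\lambda\in\mathbb{C}:k_i^2=k_j^2\text{ for some }i\neq j\}$. On $Y:=C([-1,1];\mathbb{C})$ define $(K_iq)(x):=\int_{-1}^1e^{-k_i|x-r|}q(r)\,dr$ and $$\Delta(\lambda)q:=(\lambda+\alpha)e^{\lambda\tau_0}q-\sum_{i=1}^Nc_iK_iq .$$ Let $\lambda\notin\mathcal{S}$. Then there exist unique vectors $\zeta=[\zeta_0,\dots,\zeta_{N-1}]\in\mathbb{C}^N$ and $\beta=[\beta_0,\dots,\beta_N]\in\mathbb{C}^{N+1}$, depending on $\lambda$, such that for every $q\in C^{2N}([-1,1];\mathbb{C})$ $$(\zeta_0+\zeta_1D_x^2+\dots+\zeta_{N-1}D_x^{2N-2}+D_x^{2N})\,\Delta(\lambda)q=(\beta_0+\beta_1D_x^2+\dots+\beta_{N-1}D_x^{2N-2}+\beta_ND_x^{2N})\,q$$ on $[-1,1]$.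
   Context: $D_x$ denotes differentiation with respect to $x\in[-1,1]$. The operator $\Delta(\lambda)$ is $e^{\lambda\tau_0}$ times the characteristic operator $q\mapsto(\lambda+\alpha)q(x)-\int_{-1}^1J(x,r)e^{-\lambda\tau_0-\lambda|x-r|}q(r)\,dr$ of the linearised neural field equation with connectivity $J(x,r)=\sum_ic_ie^{-\mu_i|x-r|}$ and delay $\tau(x,r)=\tau_0+|x-r|$. *)

theory Defs
  imports "HOL-Analysis.Analysis"
begin

fun dnth :: "nat \<Rightarrow> (real \<Rightarrow> complex) \<Rightarrow> real \<Rightarrow> complex" where
  "dnth 0 f = f"
| "dnth (Suc n) f = (\<lambda>x. vector_derivative (dnth n f) (at x within {-1..1}))"

definition Cn_on :: "nat \<Rightarrow> (real \<Rightarrow> complex) \<Rightarrow> bool" where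
  "Cn_on n f \<longleftrightarrow>
     (\<forall>k<n. \<forall>x\<in>{-1..1}. (dnth k f has_vector_derivative dnth (Suc k) f x) (at x within {-1..1}))
     \<and> continuous_on {-1..1} (dnth n f)"

definition Kop :: "complex \<Rightarrow> (real \<Rightarrow> complex) \<Rightarrow> real \<Rightarrow> complex" where
  "Kop k q x = integral {-1..1} (\<lambda>r. exp (- k * complex_of_real \<bar>x - r\<bar>) * q r)"

definition Delta :: "nat \<Rightarrow> real \<Rightarrow> real \<Rightarrow> (nat \<Rightarrow> complex) \<Rightarrow> (nat \<Rightarrow> complex)
                      \<Rightarrow> complex \<Rightarrow> (real \<Rightarrow> complex) \<Rightarrow> real \<Rightarrow> complex" where
  "Delta N \<alpha> \<tau>0 c \<mu> lam q x =
     (lam + complex_of_real \<alpha>) * exp (lam * complex_of_real \<tau>0) * q x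
     - (\<Sum>i<N. c i * Kop (lam + \<mu> i) q x)"

end

theory Submission
  imports Defs "HOL-Computational_Algebra.Polynomial"
begin

text \<open>
  Write k_i = \<lambda> + \<mu>_i. Splitting the integral at r = x and differentiating twice shows that each
  kernel operator solves (D_x^2 - k_i^2) K_i q = -2 k_i q on [-1,1]. Hence for every polynomial p,
  p(D_x^2) K_i q = p(k_i^2) K_i q - 2 k_i s_i(D_x^2) q, where s_i is the quotient of p by X - k_i^2.
  The monic polynomial \<Prod>_i (X - k_i^2) kills all kernel terms, and its coefficients give \<zeta>.

  For uniqueness, the difference of two such identities reads \<Sum>_i c_i Q(k_i^2) K_i q = R(D_x^2) q
  with deg Q < N. The test function q = (x + 1)^(4N) e^(k_i x) is flat at -1, so the even derivatives
  of order < 2N at -1 form a transposed Vandermonde system in the distinct nodes k_j^2; as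
  K_i q(-1) \<noteq> 0 this forces Q(k_i^2) = 0. Thus Q has N roots and vanishes, and testing with
  exponentials e^(s x) then gives R = 0.
\<close>

section \<open>Iterated derivatives on \<open>[-1,1]\<close>\<close>

abbreviation I :: "real set" where "I \<equiv> {-1..1}"

lemma dnth_Suc_apply: "dnth (Suc n) f x = vector_derivative (dnth n f) (at x within I)"
  by simp

declare dnth.simps(2) [simp del]

lemma vector_derivative_within_I:
  fixes f :: "real \<Rightarrow> complex"
  shows "x \<in> I \<Longrightarrow> (f has_vector_derivative f') (at x within I) \<Longrightarrow> vector_derivative f (at x within I) = f'"
  by (rule vector_derivative_within_closed_interval) auto

lemma dnth_cong: "(\<And>y. y \<in> I \<Longrightarrow> f y = g y) \<Longrightarrow> x \<in> I \<Longrightarrow> dnth n f x = dnth n g x"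
proof (induction n arbitrary: x)
  case (Suc n)
  then show ?case
    unfolding dnth_Suc_apply by (intro vector_derivative_cong_eq) (auto intro: always_eventually)
qed simp

lemma dnth_dnth: "dnth m (dnth n f) = dnth (m + n) f"
  by (induction m) (auto simp: dnth.simps(2))

lemma Cn_on_has_derivative:
  "Cn_on n f \<Longrightarrow> k < n \<Longrightarrow> x \<in> I \<Longrightarrow> (dnth k f has_vector_derivative dnth (Suc k) f x) (at x within I)"
  unfolding Cn_on_def by blast

lemma Cn_on_continuous: "Cn_on n f \<Longrightarrow> continuous_on I (dnth n f)"
  unfolding Cn_on_def by blast

lemma dnth_derivative_chain:
  fixes F :: "nat \<Rightarrow> real \<Rightarrow> complex"
  assumes F0: "\<And>x. x \<in> I \<Longrightarrow> F 0 x = f x"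
    and F: "\<And>k x. k < n \<Longrightarrow> x \<in> I \<Longrightarrow> (F k has_vector_derivative F (Suc k) x) (at x within I)"
  shows "k \<le> n \<Longrightarrow> x \<in> I \<Longrightarrow> dnth k f x = F k x"
proof (induction k arbitrary: x)
  case 0
  then show ?case using F0 by simp
next
  case (Suc k)
  have "dnth (Suc k) f x = vector_derivative (F k) (at x within I)"
    unfolding dnth_Suc_apply using Suc by (intro vector_derivative_cong_eq) (auto intro: always_eventually)
  also have "\<dots> = F (Suc k) x"
    using Suc.prems F by (intro vector_derivative_within_I) auto
  finally show ?case .
qed

lemma Cn_on_derivative_chain:
  fixes F :: "nat \<Rightarrow> real \<Rightarrow> complex"
  assumes F0: "\<And>x. x \<in> I \<Longrightarrow> F 0 x = f x"
    and F: "\<And>k x. k < n \<Longrightarrow> x \<in> I \<Longrightarrow> (F k has_vector_derivative F (Suc k) x) (at x within I)"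
    and cont: "continuous_on I (F n)"
  shows "Cn_on n f"
  unfolding Cn_on_def
proof (intro conjI allI impI ballI)
  note dnth_F = dnth_derivative_chain[OF F0 F]
  fix k x assume k: "k < n" and x: "x \<in> I"
  have "(F k has_vector_derivative dnth (Suc k) f x) (at x within I)"
    using F[OF k x] dnth_F[where k="Suc k" and x=x] k x by simp
  then show "(dnth k f has_vector_derivative dnth (Suc k) f x) (at x within I)"
    by (rule has_vector_derivative_transform[OF x, rotated]) (use k dnth_F in auto)
next
  show "continuous_on I (dnth n f)"
    by (rule continuous_on_eq[OF cont]) (use dnth_derivative_chain[OF F0 F] in auto)
qed

lemma Cn_on_mono:
  assumes f: "Cn_on n f" and mn: "m \<le> n"
  shows "Cn_on m f"
proof (rule Cn_on_derivative_chain[where F="\<lambda>k. dnth k f"])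
  show "continuous_on I (dnth m f)"
  proof (cases "m = n")
    case False
    then show ?thesis
      using mn Cn_on_has_derivative[OF f, of m] by (intro continuous_on_vector_derivative) auto
  qed (use f Cn_on_continuous in simp)
qed (use f mn in \<open>auto intro: Cn_on_has_derivative\<close>)

lemma Cn_on_0_iff: "Cn_on 0 f \<longleftrightarrow> continuous_on I f"
  by (simp add: Cn_on_def)

lemma Cn_on_imp_continuous: "Cn_on n f \<Longrightarrow> continuous_on I f"
  using Cn_on_mono[of n f 0] by (simp add: Cn_on_0_iff)

lemma Cn_on_dnth: "Cn_on (n + j) f \<Longrightarrow> Cn_on n (dnth j f)"
  by (rule Cn_on_derivative_chain[where F="\<lambda>k. dnth (k + j) f"])
     (auto simp: dnth_dnth Cn_on_has_derivative Cn_on_continuous)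

lemma
  shows dnth_zero: "x \<in> I \<Longrightarrow> dnth j (\<lambda>_. 0) x = 0"
    and Cn_on_zero: "Cn_on n (\<lambda>_. 0)"
  by (rule dnth_derivative_chain[where F="\<lambda>_ _. 0" and n=j, simplified],
      auto intro: Cn_on_derivative_chain[where F="\<lambda>_ _. 0"])

lemma
  assumes f: "Cn_on n f" and g: "Cn_on n g"
  shows dnth_lincomb: "j \<le> n \<Longrightarrow> x \<in> I \<Longrightarrow> dnth j (\<lambda>x. a * f x + b * g x) x = a * dnth j f x + b * dnth j g x"
    and Cn_on_lincomb: "Cn_on n (\<lambda>x. a * f x + b * g x)"
proof -
  let ?F = "\<lambda>k x. a * dnth k f x + b * dnth k g x"
  have F: "(?F k has_vector_derivative ?F (Suc k) x) (at x within I)" if "k < n" "x \<in> I" for k x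
    using that by (intro has_vector_derivative_add has_vector_derivative_mult_right
        Cn_on_has_derivative[OF f] Cn_on_has_derivative[OF g])
  show "j \<le> n \<Longrightarrow> x \<in> I \<Longrightarrow> dnth j (\<lambda>x. a * f x + b * g x) x = a * dnth j f x + b * dnth j g x"
    by (rule dnth_derivative_chain[where F="?F", OF _ F]) auto
  show "Cn_on n (\<lambda>x. a * f x + b * g x)"
    using f g by (intro Cn_on_derivative_chain[where F="?F", OF _ F])
      (auto intro!: continuous_intros simp: Cn_on_continuous)
qed

lemma
  assumes "finite S" "\<And>i. i \<in> S \<Longrightarrow> Cn_on n (f i)"
  shows dnth_sum: "j \<le> n \<Longrightarrow> x \<in> I \<Longrightarrow> dnth j (\<lambda>x. \<Sum>i\<in>S. a i * f i x) x = (\<Sum>i\<in>S. a i * dnth j (f i) x)"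
    and Cn_on_sum: "Cn_on n (\<lambda>x. \<Sum>i\<in>S. a i * f i x)"
proof -
  have "Cn_on n (\<lambda>x. \<Sum>i\<in>S. a i * f i x) \<and>
    (\<forall>j x. j \<le> n \<longrightarrow> x \<in> I \<longrightarrow> dnth j (\<lambda>x. \<Sum>i\<in>S. a i * f i x) x = (\<Sum>i\<in>S. a i * dnth j (f i) x))"
    using assms
  proof (induction S rule: finite_induct)
    case empty
    then show ?case using Cn_on_zero dnth_zero by simp
  next
    case (insert i S)
    then have fi: "Cn_on n (f i)" and IH: "Cn_on n (\<lambda>x. \<Sum>i\<in>S. a i * f i x)"
      "\<And>j x. j \<le> n \<Longrightarrow> x \<in> I \<Longrightarrow> dnth j (\<lambda>x. \<Sum>i\<in>S. a i * f i x) x = (\<Sum>i\<in>S. a i * dnth j (f i) x)"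
      by auto
    have split: "(\<lambda>x. \<Sum>i\<in>insert i S. a i * f i x) = (\<lambda>x. a i * f i x + 1 * (\<Sum>i\<in>S. a i * f i x))"
      using insert.hyps by auto
    show ?case
      unfolding split
      using Cn_on_lincomb[OF fi IH(1), where a="a i" and b=1] dnth_lincomb[OF fi IH(1), where a="a i" and b=1]
        IH(2) insert.hyps
      by simp
  qed
  then show "Cn_on n (\<lambda>x. \<Sum>i\<in>S. a i * f i x)"
    "j \<le> n \<Longrightarrow> x \<in> I \<Longrightarrow> dnth j (\<lambda>x. \<Sum>i\<in>S. a i * f i x) x = (\<Sum>i\<in>S. a i * dnth j (f i) x)"
    by auto
qed

lemma
  fixes f g1 g :: "real \<Rightarrow> complex"
  assumes f: "\<And>x. x \<in> I \<Longrightarrow> (f has_vector_derivative g1 x) (at x within I)"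
    and g1: "\<And>x. x \<in> I \<Longrightarrow> (g1 has_vector_derivative g x) (at x within I)"
    and g: "Cn_on m g"
  shows dnth_Suc_Suc_eq: "j \<le> m \<Longrightarrow> x \<in> I \<Longrightarrow> dnth (Suc (Suc j)) f x = dnth j g x"
    and Cn_on_Suc_Suc: "Cn_on (Suc (Suc m)) f"
proof -
  define F where "F k = (case k of 0 \<Rightarrow> f | Suc 0 \<Rightarrow> g1 | Suc (Suc j) \<Rightarrow> dnth j g)" for k
  have F: "\<And>k x. k < Suc (Suc m) \<Longrightarrow> x \<in> I \<Longrightarrow> (F k has_vector_derivative F (Suc k) x) (at x within I)"
    using f g1 Cn_on_has_derivative[OF g] by (auto simp: F_def split: nat.split)
  show "j \<le> m \<Longrightarrow> x \<in> I \<Longrightarrow> dnth (Suc (Suc j)) f x = dnth j g x"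
    using dnth_derivative_chain[where F=F and n="Suc (Suc m)", OF _ F, where k="Suc (Suc j)" and x=x]
    by (simp add: F_def)
  show "Cn_on (Suc (Suc m)) f"
    by (rule Cn_on_derivative_chain[where F=F, OF _ F]) (use g in \<open>auto simp: F_def Cn_on_continuous\<close>)
qed

section \<open>The kernel operators and \<open>\<Delta>(\<lambda>)\<close>\<close>

definition exp_prim :: "complex \<Rightarrow> (real \<Rightarrow> complex) \<Rightarrow> real \<Rightarrow> complex" where
  "exp_prim k q x = integral {-1..x} (\<lambda>r. exp (k * r) * q r)"

lemma has_vector_derivative_exp_scaled:
  "((\<lambda>x. exp (c * complex_of_real x)) has_vector_derivative c * exp (c * x)) (at x within S)"
  by (rule has_vector_derivative_real_field[of "\<lambda>z. exp (c * z)"]) (auto intro!: derivative_eq_intros)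

lemma exp_prim_has_vector_derivative:
  "continuous_on I q \<Longrightarrow> x \<in> I \<Longrightarrow> (exp_prim k q has_vector_derivative exp (k * x) * q x) (at x within I)"
  unfolding exp_prim_def[abs_def]
  by (rule integral_has_vector_derivative) (auto intro!: continuous_intros)

lemma Kop_split:
  assumes q: "continuous_on I q" and x: "x \<in> I"
  shows "Kop k q x = exp (- k * x) * exp_prim k q x + exp (k * x) * (exp_prim (- k) q 1 - exp_prim (- k) q x)"
proof -
  let ?h = "\<lambda>r. exp (- k * \<bar>x - r\<bar>) * q r"
  let ?g = "\<lambda>r. exp (- k * r) * q r"
  have ih: "?h integrable_on I" and ig: "?g integrable_on I"
    using q by (auto intro!: integrable_continuous_interval continuous_intros)
  have split: "Kop k q x = integral {-1..x} ?h + integral {x..1} ?h"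
    unfolding Kop_def by (rule Henstock_Kurzweil_Integration.integral_combine[symmetric]) (use x ih in auto)
  have prim: "integral {x..1} ?g = exp_prim (- k) q 1 - exp_prim (- k) q x"
    using Henstock_Kurzweil_Integration.integral_combine[OF _ _ ig, of x] x by (auto simp: exp_prim_def algebra_simps)
  have "integral {-1..x} ?h = integral {-1..x} (\<lambda>r. exp (- k * x) * (exp (k * r) * q r))"
    by (intro integral_cong) (auto simp: algebra_simps simp flip: exp_add)
  moreover have "integral {x..1} ?h = integral {x..1} (\<lambda>r. exp (k * x) * ?g r)"
    by (intro integral_cong) (auto simp: algebra_simps simp flip: exp_add)
  ultimately show ?thesis
    using split prim by (simp add: exp_prim_def)
qed

lemma Kop_second_order_ode:
  fixes k :: complex
  assumes q: "continuous_on I q"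
  obtains K1 where "\<And>x. x \<in> I \<Longrightarrow> (Kop k q has_vector_derivative K1 x) (at x within I)"
    and "\<And>x. x \<in> I \<Longrightarrow> (K1 has_vector_derivative k^2 * Kop k q x - 2 * k * q x) (at x within I)"
proof
  let ?P = "exp_prim k q" and ?R = "\<lambda>x. exp_prim (- k) q 1 - exp_prim (- k) q x"
  let ?E = "\<lambda>c x. exp (c * complex_of_real x)"
  have cancel: "exp (- k * x) * exp (k * x) = 1" "exp (k * x) * exp (- (k * x)) = 1" for x :: real
    by (simp_all flip: exp_add)
  fix x assume x: "x \<in> I"
  have P': "(?P has_vector_derivative ?E k x * q x) (at x within I)"
    using q x by (rule exp_prim_has_vector_derivative)
  have R': "(?R has_vector_derivative - (?E (- k) x * q x)) (at x within I)"
    using has_vector_derivative_diff[OF has_vector_derivative_const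
        exp_prim_has_vector_derivative[OF q x, of "- k"], of "exp_prim (- k) q 1"]
    by simp
  have "((\<lambda>x. ?E (- k) x * ?P x + ?E k x * ?R x) has_vector_derivative
      - k * ?E (- k) x * ?P x + k * ?E k x * ?R x) (at x within I)"
    by (rule has_vector_derivative_eq_rhs, (rule has_vector_derivative_add has_vector_derivative_mult
        has_vector_derivative_exp_scaled P' R')+) (simp add: algebra_simps cancel)
  then show "(Kop k q has_vector_derivative - k * ?E (- k) x * ?P x + k * ?E k x * ?R x) (at x within I)"
    by (rule has_vector_derivative_transform[OF x, rotated]) (use q Kop_split in auto)
  have "((\<lambda>x. - k * ?E (- k) x * ?P x + k * ?E k x * ?R x) has_vector_derivative
      k^2 * (?E (- k) x * ?P x + ?E k x * ?R x) - 2 * k * q x) (at x within I)"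
    by (rule has_vector_derivative_eq_rhs, (rule has_vector_derivative_add
        has_vector_derivative_mult_right has_vector_derivative_mult has_vector_derivative_exp_scaled P' R')+)
      (simp add: algebra_simps power2_eq_square cancel)
  then show "((\<lambda>x. - k * ?E (- k) x * ?P x + k * ?E k x * ?R x) has_vector_derivative
      k^2 * Kop k q x - 2 * k * q x) (at x within I)"
    using Kop_split[OF q x] by simp
qed

lemma
  assumes q: "Cn_on n q"
  shows Cn_on_Kop: "Cn_on (Suc (Suc n)) (Kop k q)"
    and dnth_Suc_Suc_Kop:
      "j \<le> n \<Longrightarrow> x \<in> I \<Longrightarrow> dnth (Suc (Suc j)) (Kop k q) x = k^2 * dnth j (Kop k q) x - 2 * k * dnth j q x"
proof -
  obtain K1 where K: "\<And>x. x \<in> I \<Longrightarrow> (Kop k q has_vector_derivative K1 x) (at x within I)"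
    and K1: "\<And>x. x \<in> I \<Longrightarrow> (K1 has_vector_derivative k^2 * Kop k q x + (- 2 * k) * q x) (at x within I)"
    using Kop_second_order_ode[OF Cn_on_imp_continuous[OF q], of k] by auto
  have Cn: "Cn_on (Suc (Suc m)) (Kop k q)" if "m \<le> n" for m
    using that
  proof (induction m)
    case 0
    have "Cn_on 0 (Kop k q)"
      unfolding Cn_on_0_iff using K by (rule continuous_on_vector_derivative)
    then show ?case
      using Cn_on_mono[OF q] by (intro Cn_on_Suc_Suc[OF K K1] Cn_on_lincomb) auto
  next
    case (Suc m)
    then show ?case
      using Cn_on_mono[OF q] Cn_on_mono[OF Suc.IH]
      by (intro Cn_on_Suc_Suc[OF K K1] Cn_on_lincomb) auto
  qed
  then show "Cn_on (Suc (Suc n)) (Kop k q)" by simp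
  have Kn: "Cn_on n (Kop k q)" using Cn_on_mono[OF Cn[OF order_refl], of n] by simp
  show "dnth (Suc (Suc j)) (Kop k q) x = k^2 * dnth j (Kop k q) x - 2 * k * dnth j q x"
    if "j \<le> n" "x \<in> I" for j x
    using dnth_Suc_Suc_eq[OF K K1 Cn_on_lincomb[OF Kn q] that] dnth_lincomb[OF Kn q that, of "k^2" "- 2 * k"]
    by simp
qed

lemma dnth_even_Kop:
  assumes q: "Cn_on n q" and m: "2 * m \<le> n + 2" and x: "x \<in> I"
  shows "dnth (2 * m) (Kop k q) x =
    (k^2)^m * Kop k q x - 2 * k * (\<Sum>j<m. (k^2)^(m - Suc j) * dnth (2 * j) q x)"
  using m
proof (induction m)
  case (Suc m)
  then have IH: "dnth (2 * m) (Kop k q) x =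
      (k^2)^m * Kop k q x - 2 * k * (\<Sum>j<m. (k^2)^(m - Suc j) * dnth (2 * j) q x)"
    by simp
  have "dnth (2 * Suc m) (Kop k q) x = k^2 * dnth (2 * m) (Kop k q) x - 2 * k * dnth (2 * m) q x"
    using Suc.prems by (simp add: dnth_Suc_Suc_Kop[OF q _ x])
  also have "\<dots> = (k^2)^Suc m * Kop k q x
      - 2 * k * ((\<Sum>j<m. k^2 * (k^2)^(m - Suc j) * dnth (2 * j) q x) + dnth (2 * m) q x)"
    unfolding IH by (simp add: algebra_simps sum_distrib_left)
  also have "(\<Sum>j<m. k^2 * (k^2)^(m - Suc j) * dnth (2 * j) q x) = (\<Sum>j<m. (k^2)^(Suc m - Suc j) * dnth (2 * j) q x)"
    by (intro sum.cong refl) (simp add: Suc_diff_Suc flip: power_Suc)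
  finally show ?case by simp
qed simp

text \<open>\<open>quotient_coeff p z M j\<close> is the \<open>j\<close>-th coefficient of the quotient of \<open>\<Sum>m\<le>M. p m * X^m\<close>
  by \<open>X - z\<close> (synthetic division); it vanishes for \<open>j \<ge> M\<close>.\<close>

definition quotient_coeff :: "(nat \<Rightarrow> complex) \<Rightarrow> complex \<Rightarrow> nat \<Rightarrow> nat \<Rightarrow> complex" where
  "quotient_coeff p z M j = (\<Sum>m = Suc j..M. p m * z^(m - Suc j))"

lemma sum_dnth_even_Kop:
  assumes q: "Cn_on (2 * M) q" and x: "x \<in> I"
  shows "(\<Sum>m\<le>M. p m * dnth (2 * m) (Kop k q) x) =
    (\<Sum>m\<le>M. p m * (k^2)^m) * Kop k q x - 2 * k * (\<Sum>j\<le>M. quotient_coeff p (k^2) M j * dnth (2 * j) q x)"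
proof -
  have "(\<Sum>m\<le>M. p m * dnth (2 * m) (Kop k q) x) =
      (\<Sum>m\<le>M. p m * ((k^2)^m * Kop k q x - 2 * k * (\<Sum>j<m. (k^2)^(m - Suc j) * dnth (2 * j) q x)))"
    by (intro sum.cong refl) (simp add: dnth_even_Kop[OF q _ x])
  also have "\<dots> =
      (\<Sum>m\<le>M. p m * (k^2)^m) * Kop k q x - 2 * k * (\<Sum>m\<le>M. \<Sum>j<m. p m * (k^2)^(m - Suc j) * dnth (2 * j) q x)"
    by (simp add: algebra_simps sum_distrib_left sum_distrib_right sum_subtractf)
  also have "(\<Sum>m\<le>M. \<Sum>j<m. p m * (k^2)^(m - Suc j) * dnth (2 * j) q x) =
      (\<Sum>j<M. quotient_coeff p (k^2) M j * dnth (2 * j) q x)"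
    by (simp add: sum.nested_swap' quotient_coeff_def sum_distrib_right)
  also have "\<dots> = (\<Sum>j\<le>M. quotient_coeff p (k^2) M j * dnth (2 * j) q x)"
    by (simp add: lessThan_Suc_atMost[symmetric] quotient_coeff_def)
  finally show ?thesis .
qed

lemma
  assumes q: "Cn_on n q"
  shows Cn_on_Delta: "Cn_on n (Delta N \<alpha> \<tau>0 c \<mu> lam q)"
    and dnth_Delta: "j \<le> n \<Longrightarrow> x \<in> I \<Longrightarrow> dnth j (Delta N \<alpha> \<tau>0 c \<mu> lam q) x =
      (lam + \<alpha>) * exp (lam * \<tau>0) * dnth j q x - (\<Sum>i<N. c i * dnth j (Kop (lam + \<mu> i) q) x)"
proof -
  have Delta: "Delta N \<alpha> \<tau>0 c \<mu> lam q =
      (\<lambda>x. ((lam + \<alpha>) * exp (lam * \<tau>0)) * q x + (- 1) * (\<Sum>i<N. c i * Kop (lam + \<mu> i) q x))"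
    by (simp add: Delta_def fun_eq_iff)
  have K: "Cn_on n (Kop (lam + \<mu> i) q)" for i
    using Cn_on_mono[OF Cn_on_Kop[OF q]] by simp
  note sum = Cn_on_sum[where f="\<lambda>i. Kop (lam + \<mu> i) q" and a=c, OF finite_lessThan K]
    dnth_sum[where f="\<lambda>i. Kop (lam + \<mu> i) q" and a=c, OF finite_lessThan K]
  show "Cn_on n (Delta N \<alpha> \<tau>0 c \<mu> lam q)"
    unfolding Delta by (intro Cn_on_lincomb q sum(1))
  show "dnth j (Delta N \<alpha> \<tau>0 c \<mu> lam q) x =
      (lam + \<alpha>) * exp (lam * \<tau>0) * dnth j q x - (\<Sum>i<N. c i * dnth j (Kop (lam + \<mu> i) q) x)"
    if "j \<le> n" "x \<in> I"
    unfolding Delta using dnth_lincomb[OF q sum(1) that, of "(lam + \<alpha>) * exp (lam * \<tau>0)" "- 1"] sum(2)[OF that]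
    by simp
qed

text \<open>For \<open>p\<close> the coefficients of the annihilator below, these are the paper's \<open>\<beta>\<^sub>j\<close>.\<close>

definition Delta_reduced_coeff :: "nat \<Rightarrow> real \<Rightarrow> real \<Rightarrow> (nat \<Rightarrow> complex) \<Rightarrow> (nat \<Rightarrow> complex)
    \<Rightarrow> complex \<Rightarrow> (nat \<Rightarrow> complex) \<Rightarrow> nat \<Rightarrow> nat \<Rightarrow> complex" where
  "Delta_reduced_coeff N \<alpha> \<tau>0 c \<mu> lam p M j =
     (lam + \<alpha>) * exp (lam * \<tau>0) * p j
     + (\<Sum>i<N. 2 * c i * (lam + \<mu> i) * quotient_coeff p ((lam + \<mu> i)^2) M j)"

lemma sum_dnth_even_Delta:
  assumes q: "Cn_on (2 * M) q" and x: "x \<in> I"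
  shows "(\<Sum>m\<le>M. p m * dnth (2 * m) (Delta N \<alpha> \<tau>0 c \<mu> lam q) x) =
    (\<Sum>j\<le>M. Delta_reduced_coeff N \<alpha> \<tau>0 c \<mu> lam p M j * dnth (2 * j) q x)
    - (\<Sum>i<N. c i * (\<Sum>m\<le>M. p m * ((lam + \<mu> i)^2)^m) * Kop (lam + \<mu> i) q x)"
proof -
  let ?A = "(lam + \<alpha>) * exp (lam * \<tau>0)" and ?k = "\<lambda>i. lam + \<mu> i"
  let ?Q = "\<lambda>j. dnth (2 * j) q x"
  have "(\<Sum>m\<le>M. p m * dnth (2 * m) (Delta N \<alpha> \<tau>0 c \<mu> lam q) x) =
      (\<Sum>m\<le>M. p m * (?A * ?Q m - (\<Sum>i<N. c i * dnth (2 * m) (Kop (?k i) q) x)))"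
    by (intro sum.cong refl) (simp add: dnth_Delta[OF q _ x])
  also have "\<dots> = ?A * (\<Sum>m\<le>M. p m * ?Q m) - (\<Sum>i<N. c i * (\<Sum>m\<le>M. p m * dnth (2 * m) (Kop (?k i) q) x))"
    by (simp add: algebra_simps sum.distrib sum_subtractf sum_distrib_left sum.swap[of _ "{..<N}"])
  also have "\<dots> = ?A * (\<Sum>m\<le>M. p m * ?Q m)
      - (\<Sum>i<N. c i * ((\<Sum>m\<le>M. p m * (?k i^2)^m) * Kop (?k i) q x
          - 2 * ?k i * (\<Sum>j\<le>M. quotient_coeff p (?k i^2) M j * ?Q j)))"
    by (simp add: sum_dnth_even_Kop[OF q x])
  also have "\<dots> = (\<Sum>j\<le>M. Delta_reduced_coeff N \<alpha> \<tau>0 c \<mu> lam p M j * ?Q j)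
      - (\<Sum>i<N. c i * (\<Sum>m\<le>M. p m * (?k i^2)^m) * Kop (?k i) q x)"
    by (simp add: Delta_reduced_coeff_def algebra_simps sum.distrib sum_subtractf sum_distrib_left
        sum_distrib_right sum.swap[of _ "{..<N}"])
  finally show ?thesis .
qed

section \<open>Existence\<close>

definition annihilator :: "nat \<Rightarrow> (nat \<Rightarrow> complex) \<Rightarrow> complex poly" where
  "annihilator N k = (\<Prod>i<N. [:- (k i ^ 2), 1:])"

lemma degree_annihilator: "degree (annihilator N k) = N"
  unfolding annihilator_def by (subst degree_prod_eq_sum_degree) auto

lemma coeff_annihilator_top: "coeff (annihilator N k) N = 1"
  using lead_coeff_prod[of "\<lambda>i. [:- (k i ^ 2), 1:]" "{..<N}"]
  by (simp add: annihilator_def degree_annihilator[unfolded annihilator_def])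

lemma poly_annihilator_root: "i < N \<Longrightarrow> poly (annihilator N k) ((k i)^2) = 0"
  unfolding annihilator_def poly_prod by (rule prod_zero) auto

lemma Delta_annihilated:
  fixes lam :: complex and \<mu> :: "nat \<Rightarrow> complex"
  assumes q: "Cn_on (2 * N) q" and x: "x \<in> I"
  defines "P \<equiv> coeff (annihilator N (\<lambda>i. lam + \<mu> i))"
  shows "(\<Sum>k<N. map P [0..<N] ! k * dnth (2 * k) (Delta N \<alpha> \<tau>0 c \<mu> lam q) x)
      + dnth (2 * N) (Delta N \<alpha> \<tau>0 c \<mu> lam q) x
    = (\<Sum>k\<le>N. map (Delta_reduced_coeff N \<alpha> \<tau>0 c \<mu> lam P N) [0..<N + 1] ! k * dnth (2 * k) q x)"
proof -
  have root: "(\<Sum>m\<le>N. P m * ((lam + \<mu> i)^2)^m) = 0" if "i < N" for i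
    using poly_annihilator_root[OF that, of "\<lambda>i. lam + \<mu> i"]
    by (simp add: P_def poly_altdef degree_annihilator)
  have "(\<Sum>k<N. map P [0..<N] ! k * dnth (2 * k) (Delta N \<alpha> \<tau>0 c \<mu> lam q) x)
      + dnth (2 * N) (Delta N \<alpha> \<tau>0 c \<mu> lam q) x =
      (\<Sum>m\<le>N. P m * dnth (2 * m) (Delta N \<alpha> \<tau>0 c \<mu> lam q) x)"
    by (simp add: P_def coeff_annihilator_top lessThan_Suc_atMost[symmetric])
  also have "\<dots> = (\<Sum>j\<le>N. Delta_reduced_coeff N \<alpha> \<tau>0 c \<mu> lam P N j * dnth (2 * j) q x)"
    using root by (simp add: sum_dnth_even_Delta[OF q x])
  also have "\<dots> = (\<Sum>k\<le>N. map (Delta_reduced_coeff N \<alpha> \<tau>0 c \<mu> lam P N) [0..<N + 1] ! k * dnth (2 * k) q x)"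
    by (simp add: atLeast0LessThan[symmetric] less_Suc_eq_le del: upt_Suc)
  finally show ?thesis .
qed

section \<open>Uniqueness\<close>

lemma power_sums_zero_imp_weight_zero:
  fixes w z :: "nat \<Rightarrow> 'a::field"
  assumes z: "inj_on z {..<N}"
    and sums: "\<And>n. n < N \<Longrightarrow> (\<Sum>i<N. w i * z i ^ n) = 0"
    and i0: "i0 < N"
  shows "w i0 = 0"
proof -
  define L where "L = (\<Prod>j\<in>{..<N} - {i0}. [:- z j, 1:])"
  have "degree L = N - 1"
    unfolding L_def using i0 by (subst degree_prod_eq_sum_degree) auto
  then have poly_L: "poly L y = (\<Sum>n<N. coeff L n * y ^ n)" for y
    using i0 by (simp add: poly_altdef lessThan_Suc_atMost[symmetric])
  have "0 = (\<Sum>n<N. coeff L n * (\<Sum>i<N. w i * z i ^ n))"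
    using sums by simp
  also have "\<dots> = (\<Sum>i<N. w i * poly L (z i))"
    unfolding poly_L sum_distrib_left by (subst sum.swap) (simp add: algebra_simps)
  also have "\<dots> = w i0 * poly L (z i0)"
  proof -
    have "(\<Sum>i\<in>{..<N} - {i0}. w i * poly L (z i)) = 0"
      unfolding L_def poly_prod by (auto intro!: sum.neutral prod_zero)
    then show ?thesis
      using sum.remove[OF finite_lessThan, where x=i0 and g="\<lambda>i. w i * poly L (z i)"] i0 by simp
  qed
  finally show ?thesis
    using z i0 by (auto simp: L_def poly_prod inj_on_def)
qed

lemma coeffs_zero_if_roots:
  fixes a z :: "nat \<Rightarrow> 'a::idom"
  assumes top: "a N = 0" and z: "inj_on z {..<N}"
    and roots: "\<And>i. i < N \<Longrightarrow> (\<Sum>m\<le>N. a m * z i ^ m) = 0"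
    and m: "m \<le> N"
  shows "a m = 0"
proof -
  define Q where "Q = (\<Sum>m<N. monom (a m) m)"
  have poly_Q: "poly Q y = (\<Sum>m\<le>N. a m * y ^ m)" for y
    using top by (simp add: Q_def poly_sum poly_monom lessThan_Suc_atMost[symmetric])
  have "Q = 0"
  proof (cases "N = 0")
    case False
    have "degree Q \<le> N - 1"
      unfolding Q_def by (rule degree_sum_le) (auto intro: order.trans[OF degree_monom_le])
    moreover have "card (z ` {..<N}) = N"
      using z by (simp add: card_image)
    ultimately show ?thesis
      using False roots poly_Q by (intro poly_eqI_degree[of "z ` {..<N}"]) auto
  qed (simp add: Q_def)
  moreover have "coeff Q m = a m"
    using m top by (cases "m = N") (auto simp: Q_def coeff_sum)
  ultimately show ?thesis by simp
qed

lemma coeffs_zero_if_poly_zero: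
  fixes a :: "nat \<Rightarrow> 'a::{idom, ring_char_0}"
  assumes zero: "\<And>y. (\<Sum>m\<le>N. a m * y ^ m) = 0" and m: "m \<le> N"
  shows "a m = 0"
proof -
  define Q where "Q = (\<Sum>m\<le>N. monom (a m) m)"
  have "Q = 0"
    using zero poly_all_0_iff_0[of Q] by (simp add: Q_def poly_sum poly_monom)
  then show ?thesis
    using m coeff_sum[of "\<lambda>m. monom (a m) m" "{..N}" m] by (simp add: Q_def)
qed

definition polyexp :: "complex poly \<Rightarrow> complex \<Rightarrow> real \<Rightarrow> complex" where
  "polyexp p s x = poly p x * exp (s * x)"

definition exp_pderiv :: "complex \<Rightarrow> complex poly \<Rightarrow> complex poly" where
  "exp_pderiv s p = pderiv p + smult s p"

lemma polyexp_has_vector_derivative: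
  "(polyexp p s has_vector_derivative polyexp (exp_pderiv s p) s x) (at x within S)"
proof -
  have "((\<lambda>z. poly p z * exp (s * z)) has_field_derivative
      poly (exp_pderiv s p) (complex_of_real x) * exp (s * x)) (at (complex_of_real x))"
    by (auto intro!: derivative_eq_intros simp: exp_pderiv_def algebra_simps)
  then show ?thesis
    unfolding polyexp_def[abs_def] by (rule has_vector_derivative_real_field)
qed

lemma dnth_polyexp: "x \<in> I \<Longrightarrow> dnth j (polyexp p s) x = polyexp ((exp_pderiv s ^^ j) p) s x"
  by (rule dnth_derivative_chain[where F="\<lambda>k. polyexp ((exp_pderiv s ^^ k) p) s" and n=j])
     (auto intro: polyexp_has_vector_derivative)

lemma Cn_on_polyexp: "Cn_on n (polyexp p s)"
  by (rule Cn_on_derivative_chain[where F="\<lambda>k. polyexp ((exp_pderiv s ^^ k) p) s"])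
     (auto intro: polyexp_has_vector_derivative continuous_on_vector_derivative)

lemma dnth_exp:
  assumes "x \<in> I"
  shows "dnth j (polyexp 1 s) x = s^j * exp (s * x)"
proof -
  have "(exp_pderiv s ^^ j) 1 = [:s^j:]"
    by (induction j) (simp_all add: exp_pderiv_def one_pCons)
  then show ?thesis
    using assms by (simp add: dnth_polyexp polyexp_def)
qed

lemma exp_pderiv_power_dvd:
  assumes "[:1, 1:]^Suc M dvd p"
  shows "[:1, 1:]^M dvd exp_pderiv s p"
proof -
  obtain r where r: "p = [:1, 1:]^Suc M * r" using assms by (auto elim: dvdE)
  have "pderiv p = [:1, 1:]^Suc M * pderiv r + r * (smult (of_nat (Suc M)) ([:1, 1:]^M) * pderiv [:1, 1:])"
    unfolding r pderiv_mult pderiv_power_Suc ..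
  also have "[:1, 1:]^M dvd \<dots>"
    by (intro dvd_add dvd_mult2 dvd_mult dvd_smult) (auto simp del: power_Suc intro: dvd_power_le)
  finally have "[:1, 1:]^M dvd pderiv p" .
  moreover have "[:1, 1:]^M dvd smult s p"
    unfolding r by (intro dvd_smult dvd_mult2) (auto simp del: power_Suc intro: dvd_power_le)
  ultimately show ?thesis
    unfolding exp_pderiv_def by (rule dvd_add)
qed

lemma dnth_polyexp_flat:
  assumes "j < M"
  shows "dnth j (polyexp ([:1, 1:]^M) s) (-1) = 0"
proof -
  have "[:1, 1:]^(M - i) dvd (exp_pderiv s ^^ i) ([:1, 1:]^M)" if "i \<le> M" for i
    using that
  proof (induction i)
    case (Suc i)
    then have "[:1, 1:]^Suc (M - Suc i) dvd (exp_pderiv s ^^ i) ([:1, 1:]^M)"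
      by (simp add: Suc_diff_Suc)
    then show ?case by (simp add: exp_pderiv_power_dvd)
  qed simp
  then have "[:1, 1:]^(M - j) dvd (exp_pderiv s ^^ j) ([:1, 1:]^M)"
    using assms by simp
  moreover have "[:1, 1:] dvd [:1, 1:]^(M - j)"
    using assms by (simp add: dvd_power)
  ultimately have "[:1, 1:] dvd (exp_pderiv s ^^ j) ([:1, 1:]^M)"
    by (rule dvd_trans[rotated])
  then show ?thesis
    by (auto simp: dnth_polyexp polyexp_def elim!: dvdE)
qed

lemma Kop_polyexp_left_end:
  "Kop k (polyexp ([:1, 1:]^M) k) (-1) = exp (- k) * of_real (2^Suc M / real (Suc M))"
proof -
  have "((\<lambda>r. (r + 1)^M) has_integral (2^Suc M / real (Suc M))) I"
  proof -
    have "((\<lambda>r. (r + 1)^M) has_integral ((1 + 1)^Suc M / real (Suc M) - (-1 + 1)^Suc M / real (Suc M))) I"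
      by (intro fundamental_theorem_of_calculus)
         (auto intro!: derivative_eq_intros simp flip: has_real_derivative_iff_has_vector_derivative
            simp del: power_Suc of_nat_Suc)
    then show ?thesis by simp
  qed
  then have "((\<lambda>r. exp (- k) * of_real ((r + 1)^M)) has_integral exp (- k) * of_real (2^Suc M / real (Suc M))) I"
    by (intro has_integral_mult_right has_integral_of_real)
  moreover have "exp (- k * \<bar>- 1 - r\<bar>) * polyexp ([:1, 1:]^M) k r = exp (- k) * of_real ((r + 1)^M)"
    if "r \<in> I" for r
  proof -
    have "\<bar>- 1 - r\<bar> = r + 1" using that by auto
    then have "exp (- k * \<bar>- 1 - r\<bar>) * exp (k * r) = exp (- k)"
      by (simp add: algebra_simps flip: exp_add)
    moreover have "poly ([:1, 1:]^M) (complex_of_real r) = of_real ((r + 1)^M)"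
      by (simp add: poly_power algebra_simps)
    ultimately show ?thesis
      unfolding polyexp_def by (metis mult.commute mult.left_commute)
  qed
  ultimately show ?thesis
    unfolding Kop_def by (metis (no_types, lifting) has_integral_cong integral_unique)
qed

lemma Delta_difference_moments:
  fixes lam :: complex and c \<mu> d e :: "nat \<Rightarrow> complex"
  assumes H: "\<And>q x. (\<forall>n. Cn_on n q) \<Longrightarrow> x \<in> I \<Longrightarrow>
      (\<Sum>m\<le>N. d m * dnth (2 * m) (Delta N \<alpha> \<tau>0 c \<mu> lam q) x) = (\<Sum>j\<le>N. e j * dnth (2 * j) q x)"
    and q: "\<forall>n. Cn_on n q" and flat: "\<And>j. j < 4 * N \<Longrightarrow> dnth j q (-1) = 0"
    and n: "n < N"
  shows "(\<Sum>i<N. c i * (\<Sum>m\<le>N. d m * ((lam + \<mu> i)^2)^m) * Kop (lam + \<mu> i) q (-1) * ((lam + \<mu> i)^2)^n) = 0"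
proof -
  let ?k = "\<lambda>i. lam + \<mu> i"
  define w where "w i = c i * (\<Sum>m\<le>N. d m * (?k i^2)^m)" for i
  define b where "b j = Delta_reduced_coeff N \<alpha> \<tau>0 c \<mu> lam d N j - e j" for j
  have K: "Cn_on (2 * n) (Kop (?k i) q)" for i
    using Cn_on_mono[OF Cn_on_Kop[OF spec[OF q, of "2 * n"]]] by simp
  have D: "Cn_on (2 * n) (dnth (2 * j) q)" for j
    using Cn_on_dnth[OF spec[OF q, of "2 * n + 2 * j"]] .
  have "(\<Sum>i<N. w i * Kop (?k i) q x) = (\<Sum>j\<le>N. b j * dnth (2 * j) q x)" if x: "x \<in> I" for x
  proof -
    have "(\<Sum>m\<le>N. d m * dnth (2 * m) (Delta N \<alpha> \<tau>0 c \<mu> lam q) x) =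
        (\<Sum>j\<le>N. Delta_reduced_coeff N \<alpha> \<tau>0 c \<mu> lam d N j * dnth (2 * j) q x)
        - (\<Sum>i<N. w i * Kop (?k i) q x)"
      using sum_dnth_even_Delta[OF spec[OF q, of "2 * N"] x] by (simp add: w_def)
    then show ?thesis
      using H[OF q x] by (simp add: b_def left_diff_distrib sum_subtractf)
  qed
  then have "dnth (2 * n) (\<lambda>x. \<Sum>i<N. w i * Kop (?k i) q x) (-1) =
      dnth (2 * n) (\<lambda>x. \<Sum>j\<le>N. b j * dnth (2 * j) q x) (-1)"
    by (intro dnth_cong) auto
  also have "\<dots> = (\<Sum>j\<le>N. b j * dnth (2 * n + 2 * j) q (-1))"
    using dnth_sum[OF finite_atMost D, of "2 * n" "-1" b] by (simp add: dnth_dnth)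
  also have "\<dots> = 0"
    using n by (intro sum.neutral) (auto intro: flat)
  finally have "(\<Sum>i<N. w i * dnth (2 * n) (Kop (?k i) q) (-1)) = 0"
    using dnth_sum[OF finite_lessThan K, of "2 * n" "-1" w] by simp
  moreover have "dnth (2 * n) (Kop (?k i) q) (-1) = (?k i^2)^n * Kop (?k i) q (-1)" for i
    using n by (simp add: dnth_even_Kop[of "2 * n" q] q flat)
  ultimately show ?thesis
    by (simp add: w_def mult_ac)
qed

lemma Delta_difference_root:
  fixes lam :: complex and c \<mu> d e :: "nat \<Rightarrow> complex"
  assumes H: "\<And>q x. (\<forall>n. Cn_on n q) \<Longrightarrow> x \<in> I \<Longrightarrow>
      (\<Sum>m\<le>N. d m * dnth (2 * m) (Delta N \<alpha> \<tau>0 c \<mu> lam q) x) = (\<Sum>j\<le>N. e j * dnth (2 * j) q x)"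
    and c: "c i0 \<noteq> 0" and distinct: "inj_on (\<lambda>i. (lam + \<mu> i)^2) {..<N}" and i0: "i0 < N"
  shows "(\<Sum>m\<le>N. d m * ((lam + \<mu> i0)^2)^m) = 0"
proof -
  define q where "q = polyexp ([:1, 1:]^(4 * N)) (lam + \<mu> i0)"
  have q: "\<forall>n. Cn_on n q"
    by (simp add: q_def Cn_on_polyexp)
  have flat: "\<And>j. j < 4 * N \<Longrightarrow> dnth j q (-1) = 0"
    by (simp add: q_def dnth_polyexp_flat)
  have "c i0 * (\<Sum>m\<le>N. d m * ((lam + \<mu> i0)^2)^m) * Kop (lam + \<mu> i0) q (-1) = 0"
    by (rule power_sums_zero_imp_weight_zero[OF distinct _ i0,
          where w="\<lambda>i. c i * (\<Sum>m\<le>N. d m * ((lam + \<mu> i)^2)^m) * Kop (lam + \<mu> i) q (-1)"])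
       (rule Delta_difference_moments[OF H q flat])
  moreover have "Kop (lam + \<mu> i0) q (-1) \<noteq> 0"
    using of_nat_neq_0[of "4 * N", where 'a=complex] by (simp add: q_def Kop_polyexp_left_end)
  ultimately show ?thesis
    using c by simp
qed

lemma Delta_difference_zero:
  fixes lam :: complex and c \<mu> d e :: "nat \<Rightarrow> complex"
  assumes H: "\<And>q x. (\<forall>n. Cn_on n q) \<Longrightarrow> x \<in> I \<Longrightarrow>
      (\<Sum>m\<le>N. d m * dnth (2 * m) (Delta N \<alpha> \<tau>0 c \<mu> lam q) x) = (\<Sum>j\<le>N. e j * dnth (2 * j) q x)"
    and c: "\<forall>i<N. c i \<noteq> 0" and distinct: "inj_on (\<lambda>i. (lam + \<mu> i)^2) {..<N}" and top: "d N = 0"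
  shows "\<forall>m\<le>N. d m = 0" and "\<forall>j\<le>N. e j = 0"
proof -
  show d: "\<forall>m\<le>N. d m = 0"
    using Delta_difference_root[OF H _ distinct] c
    by (auto intro: coeffs_zero_if_roots[where a=d and z="\<lambda>i. (lam + \<mu> i)^2", OF top distinct])
  show "\<forall>j\<le>N. e j = 0"
  proof (intro allI impI)
    have "(\<Sum>j\<le>N. e j * y ^ j) = 0" for y :: complex
    proof -
      let ?q = "polyexp 1 (csqrt y)"
      have "(\<Sum>m\<le>N. d m * dnth (2 * m) (Delta N \<alpha> \<tau>0 c \<mu> lam ?q) 0) = 0"
        using d by (intro sum.neutral) simp
      then have "(\<Sum>j\<le>N. e j * dnth (2 * j) ?q 0) = 0"
        using H[of ?q 0] Cn_on_polyexp by simp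
      moreover have "dnth (2 * j) ?q 0 = y ^ j" for j
        using dnth_exp[of 0 "2 * j" "csqrt y"] by (simp only: power_mult power2_csqrt) simp
      ultimately show ?thesis
        by simp
    qed
    then show "e j = 0" if "j \<le> N" for j
      using that by (rule coeffs_zero_if_poly_zero)
  qed
qed

lemma Delta_identity_coeffs_unique:
  fixes lam :: complex and c \<mu> :: "nat \<Rightarrow> complex" and \<zeta>1 \<zeta>2 \<beta>1 \<beta>2 :: "complex list"
  assumes c: "\<forall>i<N. c i \<noteq> 0" and distinct: "inj_on (\<lambda>i. (lam + \<mu> i)^2) {..<N}"
    and len: "length \<zeta>1 = N" "length \<zeta>2 = N" "length \<beta>1 = N + 1" "length \<beta>2 = N + 1"
    and id1: "\<And>q x. Cn_on (2 * N) q \<Longrightarrow> x \<in> I \<Longrightarrow>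
      (\<Sum>k<N. \<zeta>1 ! k * dnth (2 * k) (Delta N \<alpha> \<tau>0 c \<mu> lam q) x) + dnth (2 * N) (Delta N \<alpha> \<tau>0 c \<mu> lam q) x
        = (\<Sum>k\<le>N. \<beta>1 ! k * dnth (2 * k) q x)"
    and id2: "\<And>q x. Cn_on (2 * N) q \<Longrightarrow> x \<in> I \<Longrightarrow>
      (\<Sum>k<N. \<zeta>2 ! k * dnth (2 * k) (Delta N \<alpha> \<tau>0 c \<mu> lam q) x) + dnth (2 * N) (Delta N \<alpha> \<tau>0 c \<mu> lam q) x
        = (\<Sum>k\<le>N. \<beta>2 ! k * dnth (2 * k) q x)"
  shows "\<zeta>1 = \<zeta>2 \<and> \<beta>1 = \<beta>2"
proof -
  define d where "d m = (if m < N then \<zeta>1 ! m - \<zeta>2 ! m else 0)" for m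
  define e where "e j = \<beta>1 ! j - \<beta>2 ! j" for j
  have H: "(\<Sum>m\<le>N. d m * dnth (2 * m) (Delta N \<alpha> \<tau>0 c \<mu> lam q) x) = (\<Sum>j\<le>N. e j * dnth (2 * j) q x)"
    if q: "\<forall>n. Cn_on n q" and x: "x \<in> I" for q x
  proof -
    let ?D = "\<lambda>m. dnth (2 * m) (Delta N \<alpha> \<tau>0 c \<mu> lam q) x" and ?Q = "\<lambda>j. dnth (2 * j) q x"
    have "(\<Sum>m\<le>N. d m * ?D m) = (\<Sum>m<N. \<zeta>1 ! m * ?D m) - (\<Sum>m<N. \<zeta>2 ! m * ?D m)"
      by (simp add: d_def lessThan_Suc_atMost[symmetric] left_diff_distrib sum_subtractf)
    also have "\<dots> = (\<Sum>j\<le>N. \<beta>1 ! j * ?Q j) - (\<Sum>j\<le>N. \<beta>2 ! j * ?Q j)"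
      using id1[OF spec[OF q] x] id2[OF spec[OF q] x] by (simp add: eq_diff_eq[symmetric])
    also have "\<dots> = (\<Sum>j\<le>N. e j * ?Q j)"
      by (simp add: e_def left_diff_distrib sum_subtractf)
    finally show ?thesis .
  qed
  have "d N = 0" by (simp add: d_def)
  note zero = Delta_difference_zero[OF H c distinct this]
  have "\<zeta>1 ! m = \<zeta>2 ! m" if "m < N" for m
    using zero(1)[rule_format, of m] that by (simp add: d_def)
  moreover have "\<beta>1 ! j = \<beta>2 ! j" if "j \<le> N" for j
    using zero(2)[rule_format, of j] that by (simp add: e_def)
  ultimately show ?thesis
    using len by (auto intro!: nth_equalityI)
qed

theorem lemma3p12:
  fixes N :: nat and \<alpha> \<tau>0 :: real and c \<mu> :: "nat \<Rightarrow> complex" and lam :: complex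
  assumes "N \<ge> 1" and "\<alpha> > 0" and "\<tau>0 \<ge> 0"
    and "\<forall>i<N. c i \<noteq> 0"
    and "inj_on \<mu> {..<N}"
    and "\<forall>i<N. \<forall>j<N. i \<noteq> j \<longrightarrow> (lam + \<mu> i)^2 \<noteq> (lam + \<mu> j)^2"
  shows "\<exists>!(\<zeta>, \<beta>). length \<zeta> = N \<and> length \<beta> = N + 1 \<and>
           (\<forall>q. Cn_on (2*N) q \<longrightarrow>
              Cn_on (2*N) (Delta N \<alpha> \<tau>0 c \<mu> lam q) \<and>
              (\<forall>x\<in>{-1..1}.
                 (\<Sum>k<N. \<zeta> ! k * dnth (2*k) (Delta N \<alpha> \<tau>0 c \<mu> lam q) x)
                   + dnth (2*N) (Delta N \<alpha> \<tau>0 c \<mu> lam q) x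
                 = (\<Sum>k\<le>N. \<beta> ! k * dnth (2*k) q x)))"
    (is "\<exists>!p. ?holds p")
proof -
  define P where "P = coeff (annihilator N (\<lambda>i. lam + \<mu> i))"
  define \<zeta> where "\<zeta> = map P [0..<N]"
  define \<beta> where "\<beta> = map (Delta_reduced_coeff N \<alpha> \<tau>0 c \<mu> lam P N) [0..<N + 1]"
  have distinct: "inj_on (\<lambda>i. (lam + \<mu> i)^2) {..<N}"
    using assms(6) by (auto simp: inj_on_def)
  have identity: "(\<Sum>k<N. \<zeta> ! k * dnth (2 * k) (Delta N \<alpha> \<tau>0 c \<mu> lam q) x)
      + dnth (2 * N) (Delta N \<alpha> \<tau>0 c \<mu> lam q) x = (\<Sum>k\<le>N. \<beta> ! k * dnth (2 * k) q x)"
    if "Cn_on (2 * N) q" "x \<in> I" for q x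
    unfolding \<zeta>_def \<beta>_def P_def using that by (rule Delta_annihilated)
  show ?thesis
  proof (rule ex1I[of ?holds "(\<zeta>, \<beta>)"])
    show "?holds (\<zeta>, \<beta>)"
      using identity Cn_on_Delta by (simp add: \<zeta>_def \<beta>_def)
    fix p assume holds: "?holds p"
    obtain \<zeta>' \<beta>' where p: "p = (\<zeta>', \<beta>')" by (cases p)
    from holds have "length \<zeta>' = N" "length \<beta>' = N + 1"
      and "\<And>q x. Cn_on (2 * N) q \<Longrightarrow> x \<in> I \<Longrightarrow>
        (\<Sum>k<N. \<zeta>' ! k * dnth (2 * k) (Delta N \<alpha> \<tau>0 c \<mu> lam q) x) + dnth (2 * N) (Delta N \<alpha> \<tau>0 c \<mu> lam q) x
          = (\<Sum>k\<le>N. \<beta>' ! k * dnth (2 * k) q x)"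
      by (auto simp: p)
    then have "\<zeta>' = \<zeta> \<and> \<beta>' = \<beta>"
      by (intro Delta_identity_coeffs_unique[OF assms(4) distinct _ _ _ _ _ identity]) (simp_all add: \<zeta>_def \<beta>_def)
    then show "p = (\<zeta>, \<beta>)" by (simp add: p)
  qed
qed

end
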